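(* For any connected graphs $G$ and $H$, $$\beta (G_{SR}\boxtimes H_{SR})\ge \beta ((G\boxtimes H)_{SR})\ge \beta(G_{SR}\oplus H_{SR}).$$
   Context: $\beta(F)$ denotes the independence number of a graph $F$ (largest size of a set of pairwise non-adjacent vertices). For a connected graph $G$ with shortest-path distance $d_G$: $u$ is maximally distant from $v$ if for every neighbor $w$ of $u$, $d_G(v,w)\le d_G(u,v)$; $u,v$ are mutually maximally distant if each is maximally distant from the other. The strong resolving graph $G_{SR}$ has vertex set $V(G)$, with $u,v$ adjacent iff they are mutually maximally distant in $G$. The strong product $G\boxtimes H$ has vertex set $V(G)\times V(H)$, with $(a,b)\sim(c,d)$ iff ($a=c$ and $bd\in E(H)$) or ($ac\in E(G)$ and $b=d$) or ($ac\in E(G)$ and $bd\in E(H)$). The Cartesian sum $G\oplus H$ has vertex set $V(G)\times V(H)$, with $(a,b)\sim(c,d)$ iff $ac\in E(G)$ or $bd\in E(H)$. *)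

theory Defs
  imports Main
begin

definition graph :: "'a set \<Rightarrow> ('a \<Rightarrow> 'a \<Rightarrow> bool) \<Rightarrow> bool" where
  "graph V E \<longleftrightarrow> finite V \<and> V \<noteq> {} \<and>
     (\<forall>u v. E u v \<longrightarrow> u \<in> V \<and> v \<in> V \<and> u \<noteq> v \<and> E v u)"

definition is_walk :: "'a set \<Rightarrow> ('a \<Rightarrow> 'a \<Rightarrow> bool) \<Rightarrow> 'a list \<Rightarrow> bool" where
  "is_walk V E xs \<longleftrightarrow> xs \<noteq> [] \<and> set xs \<subseteq> V \<and>
     (\<forall>i. Suc i < length xs \<longrightarrow> E (xs ! i) (xs ! Suc i))"

definition connected_graph :: "'a set \<Rightarrow> ('a \<Rightarrow> 'a \<Rightarrow> bool) \<Rightarrow> bool" where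
  "connected_graph V E \<longleftrightarrow>
     (\<forall>u\<in>V. \<forall>v\<in>V. \<exists>xs. is_walk V E xs \<and> hd xs = u \<and> last xs = v)"

definition gdist :: "'a set \<Rightarrow> ('a \<Rightarrow> 'a \<Rightarrow> bool) \<Rightarrow> 'a \<Rightarrow> 'a \<Rightarrow> nat" where
  "gdist V E u v = (LEAST n. \<exists>xs. is_walk V E xs \<and> hd xs = u \<and> last xs = v \<and> length xs = Suc n)"

definition max_distant :: "'a set \<Rightarrow> ('a \<Rightarrow> 'a \<Rightarrow> bool) \<Rightarrow> 'a \<Rightarrow> 'a \<Rightarrow> bool" where
  "max_distant V E u v \<longleftrightarrow> (\<forall>w\<in>V. E u w \<longrightarrow> gdist V E v w \<le> gdist V E u v)"

definition mutually_max_distant :: "'a set \<Rightarrow> ('a \<Rightarrow> 'a \<Rightarrow> bool) \<Rightarrow> 'a \<Rightarrow> 'a \<Rightarrow> bool" where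
  "mutually_max_distant V E u v \<longleftrightarrow> max_distant V E u v \<and> max_distant V E v u"

text \<open>Edge relation of the strong resolving graph G_SR (vertex set V).\<close>
definition SR :: "'a set \<Rightarrow> ('a \<Rightarrow> 'a \<Rightarrow> bool) \<Rightarrow> 'a \<Rightarrow> 'a \<Rightarrow> bool" where
  "SR V E u v \<longleftrightarrow> u \<in> V \<and> v \<in> V \<and> u \<noteq> v \<and> mutually_max_distant V E u v"

definition strong_prod :: "'a set \<Rightarrow> ('a \<Rightarrow> 'a \<Rightarrow> bool) \<Rightarrow> 'b set \<Rightarrow> ('b \<Rightarrow> 'b \<Rightarrow> bool)
    \<Rightarrow> 'a \<times> 'b \<Rightarrow> 'a \<times> 'b \<Rightarrow> bool" where
  "strong_prod VG EG VH EH x y \<longleftrightarrow> x \<in> VG \<times> VH \<and> y \<in> VG \<times> VH \<and>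
     ((fst x = fst y \<and> EH (snd x) (snd y)) \<or>
      (EG (fst x) (fst y) \<and> snd x = snd y) \<or>
      (EG (fst x) (fst y) \<and> EH (snd x) (snd y)))"

definition cart_sum :: "'a set \<Rightarrow> ('a \<Rightarrow> 'a \<Rightarrow> bool) \<Rightarrow> 'b set \<Rightarrow> ('b \<Rightarrow> 'b \<Rightarrow> bool)
    \<Rightarrow> 'a \<times> 'b \<Rightarrow> 'a \<times> 'b \<Rightarrow> bool" where
  "cart_sum VG EG VH EH x y \<longleftrightarrow> x \<in> VG \<times> VH \<and> y \<in> VG \<times> VH \<and>
     (EG (fst x) (fst y) \<or> EH (snd x) (snd y))"

definition independent_set :: "'a set \<Rightarrow> ('a \<Rightarrow> 'a \<Rightarrow> bool) \<Rightarrow> 'a set \<Rightarrow> bool" where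
  "independent_set V E S \<longleftrightarrow> S \<subseteq> V \<and> (\<forall>x\<in>S. \<forall>y\<in>S. x \<noteq> y \<longrightarrow> \<not> E x y)"

text \<open>Independence number (for finite V).\<close>
definition indep_num :: "'a set \<Rightarrow> ('a \<Rightarrow> 'a \<Rightarrow> bool) \<Rightarrow> nat" where
  "indep_num V E = Max (card ` {S. independent_set V E S})"

end

theory Submission
  imports Defs
begin

text \<open>Distances in the strong product are the maxima of the distances in the factors: walks
in the factors that may stand still can be run in parallel, and the projections of a walk in
the product are such walks. If (g,h) and (g',h') are adjacent in G_SR \<boxtimes> H_SR, each coordinate
is constant or a mutually maximally distant pair, so every neighbour of (g,h) stays within
max(d(g,g'), d(h,h')) of (g',h'); hence G_SR \<boxtimes> H_SR is a subgraph of (G \<boxtimes> H)_SR.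
Conversely, if (g,h) and (g',h') are mutually maximally distant in G \<boxtimes> H and, say,
d(h,h') \<le> d(g,g'), moving only the first coordinate shows that g and g' are mutually
maximally distant in G; hence (G \<boxtimes> H)_SR is a subgraph of G_SR \<oplus> H_SR. The independence
number is antitone with respect to adding edges.\<close>

lemma graph_edgeD:
  assumes "graph V E" "E u v"
  shows "u \<in> V" "v \<in> V" "E v u"
  using assms unfolding graph_def by blast+

lemma is_walk_iff_successively:
  "is_walk V E xs \<longleftrightarrow> xs \<noteq> [] \<and> set xs \<subseteq> V \<and> successively E xs"
  by (simp add: is_walk_def successively_conv_nth)

lemma is_walk_remdups_adj:
  assumes "xs \<noteq> []" "set xs \<subseteq> V" "successively E\<^sup>=\<^sup>= xs"
  shows "is_walk V E (remdups_adj xs)"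
proof -
  have "successively E\<^sup>=\<^sup>= (remdups_adj xs)"
    using assms(3) by (rule successively_remdups_adjI)
  moreover have "successively (\<noteq>) (remdups_adj xs)"
    using distinct_adj_remdups_adj unfolding distinct_adj_def .
  ultimately have "successively E (remdups_adj xs)"
    by (auto simp: successively_conv_nth)
  then show ?thesis
    using assms(1,2) by (simp add: is_walk_iff_successively)
qed

lemma gdist_le_walk:
  assumes "is_walk V E xs"
  shows "gdist V E (hd xs) (last xs) \<le> length xs - 1"
  unfolding gdist_def
  by (rule Least_le) (use assms in \<open>auto simp: is_walk_def\<close>)

lemma gdist_le_reflclp_walk:
  assumes "xs \<noteq> []" "set xs \<subseteq> V" "successively E\<^sup>=\<^sup>= xs"
  shows "gdist V E (hd xs) (last xs) \<le> length xs - 1"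
  using gdist_le_walk[OF is_walk_remdups_adj[OF assms]] remdups_adj_length[of xs]
  by (simp add: le_trans diff_le_mono)

lemma shortest_walk_exists:
  assumes "is_walk V E xs"
  shows "\<exists>ys. is_walk V E ys \<and> hd ys = hd xs \<and> last ys = last xs
           \<and> length ys = Suc (gdist V E (hd xs) (last xs))"
proof -
  have "\<exists>n ys. is_walk V E ys \<and> hd ys = hd xs \<and> last ys = last xs \<and> length ys = Suc n"
    using assms by (intro exI[of _ "length xs - 1"] exI[of _ xs]) (auto simp: is_walk_def)
  from LeastI_ex[OF this] show ?thesis unfolding gdist_def .
qed

lemma obtain_shortest_walk:
  assumes "connected_graph V E" "u \<in> V" "v \<in> V"
  obtains ys where "is_walk V E ys" "hd ys = u" "last ys = v" "length ys = Suc (gdist V E u v)"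
proof -
  obtain xs where xs: "is_walk V E xs" "hd xs = u" "last xs = v"
    using assms unfolding connected_graph_def by blast
  show thesis
    using shortest_walk_exists[OF xs(1)] xs(2,3) that by blast
qed

lemma gdist_self [simp]: "u \<in> V \<Longrightarrow> gdist V E u u = 0"
  using gdist_le_walk[of V E "[u]"] by (simp add: is_walk_def)

lemma gdist_eq_0_iff:
  assumes "connected_graph V E" "u \<in> V" "v \<in> V"
  shows "gdist V E u v = 0 \<longleftrightarrow> u = v"
proof
  assume "gdist V E u v = 0"
  then obtain ys where ys: "hd ys = u" "last ys = v" "length ys = Suc 0"
    using obtain_shortest_walk[OF assms] by metis
  then obtain y where "ys = [y]"
    by (auto simp: length_Suc_conv)
  then show "u = v"
    using ys by simp
qed (use assms in simp)

lemma gdist_adjacent_le_1: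
  assumes "graph V E" "E u v"
  shows "gdist V E u v \<le> 1"
  using gdist_le_walk[of V E "[u, v]"] graph_edgeD[OF assms] assms(2)
  by (simp add: is_walk_iff_successively)

lemma gdist_commute:
  assumes "graph V E" "connected_graph V E" "u \<in> V" "v \<in> V"
  shows "gdist V E u v = gdist V E v u"
proof -
  have le: "gdist V E y x \<le> gdist V E x y" if xy: "x \<in> V" "y \<in> V" for x y
  proof -
    obtain ys where ys: "is_walk V E ys" "hd ys = x" "last ys = y" "length ys = Suc (gdist V E x y)"
      using obtain_shortest_walk[OF assms(2) xy] .
    have "successively E ys"
      using ys(1) by (simp add: is_walk_iff_successively)
    then have "successively (\<lambda>a b. E b a) ys"
      by (rule successively_mono) (blast intro: graph_edgeD(3)[OF assms(1)])
    then have "is_walk V E (rev ys)"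
      using ys(1) by (simp add: is_walk_iff_successively)
    then show ?thesis
      using gdist_le_walk[of V E "rev ys"] ys by (simp add: hd_rev last_rev)
  qed
  show ?thesis using le[of u v] le[of v u] assms(3,4) by simp
qed

lemma gdist_map_le:
  assumes "connected_graph V E" "u \<in> V" "v \<in> V" "f ` V \<subseteq> V'"
    and "\<And>x y. E x y \<Longrightarrow> E'\<^sup>=\<^sup>= (f x) (f y)"
  shows "gdist V' E' (f u) (f v) \<le> gdist V E u v"
proof -
  obtain ys where ys: "is_walk V E ys" "hd ys = u" "last ys = v" "length ys = Suc (gdist V E u v)"
    using obtain_shortest_walk[OF assms(1-3)] .
  have "successively E'\<^sup>=\<^sup>= (map f ys)"
    using successively_mono[of E ys "\<lambda>x y. E'\<^sup>=\<^sup>= (f x) (f y)"] ys(1) assms(5)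
    by (simp add: is_walk_iff_successively successively_map)
  moreover have "map f ys \<noteq> []" "set (map f ys) \<subseteq> V'"
    using ys(1) assms(4) by (auto simp: is_walk_iff_successively)
  ultimately show ?thesis
    using gdist_le_reflclp_walk[of "map f ys" V' E'] ys by (simp add: hd_map last_map)
qed

lemma successively_append_replicate_last:
  assumes "successively P xs" "P (last xs) (last xs)"
  shows "successively P (xs @ replicate k (last xs))"
proof -
  have "successively P (replicate k (last xs))"
  proof (induction k)
    case (Suc k)
    then show ?case
      using assms(2) by (cases k) (auto simp: successively_Cons)
  qed simp
  then show ?thesis
    using assms by (cases k) (auto simp: successively_append_iff)
qed

lemma obtain_padded_walk:
  assumes "is_walk V E p" "length p \<le> n"
  obtains p' where "set p' \<subseteq> V" "successively E\<^sup>=\<^sup>= p'" "length p' = n"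
    "hd p' = hd p" "last p' = last p"
proof
  let ?p' = "p @ replicate (n - length p) (last p)"
  have "successively E\<^sup>=\<^sup>= p"
    using successively_mono[of E p "E\<^sup>=\<^sup>="] assms(1) by (simp add: is_walk_iff_successively)
  then show "successively E\<^sup>=\<^sup>= ?p'"
    by (rule successively_append_replicate_last) simp
  show "set ?p' \<subseteq> V" "length ?p' = n" "hd ?p' = hd p" "last ?p' = last p"
    using assms by (auto simp: is_walk_iff_successively last_append)
qed

lemma strong_prod_walk:
  assumes p: "is_walk VG EG p" and q: "is_walk VH EH q"
  obtains r where "is_walk (VG \<times> VH) (strong_prod VG EG VH EH) r"
    "hd r = (hd p, hd q)" "last r = (last p, last q)" "length r \<le> max (length p) (length q)"
proof -
  define n where "n = max (length p) (length q)"
  obtain p' where p': "set p' \<subseteq> VG" "successively EG\<^sup>=\<^sup>= p'" "length p' = n"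
    "hd p' = hd p" "last p' = last p"
    using obtain_padded_walk[OF p, of n] by (auto simp: n_def)
  obtain q' where q': "set q' \<subseteq> VH" "successively EH\<^sup>=\<^sup>= q'" "length q' = n"
    "hd q' = hd q" "last q' = last q"
    using obtain_padded_walk[OF q, of n] by (auto simp: n_def)
  have "n \<noteq> 0"
    using p by (auto simp: n_def is_walk_def)
  then have ne: "p' \<noteq> []" "q' \<noteq> []"
    using p'(3) q'(3) by auto
  define r where "r = zip p' q'"
  have "successively (strong_prod VG EG VH EH)\<^sup>=\<^sup>= r"
    unfolding successively_conv_nth
  proof (intro allI impI)
    fix i assume i: "Suc i < length r"
    then have len: "Suc i < length p'" "Suc i < length q'"
      using p'(3) q'(3) by (auto simp: r_def)
    then have "EG\<^sup>=\<^sup>= (p' ! i) (p' ! Suc i)" "EH\<^sup>=\<^sup>= (q' ! i) (q' ! Suc i)"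
      using successively_nth[OF p'(2)] successively_nth[OF q'(2)] by blast+
    moreover have "p' ! i \<in> VG" "p' ! Suc i \<in> VG" "q' ! i \<in> VH" "q' ! Suc i \<in> VH"
      using len p'(1) q'(1) by (meson Suc_lessD nth_mem subsetD)+
    ultimately show "(strong_prod VG EG VH EH)\<^sup>=\<^sup>= (r ! i) (r ! Suc i)"
      using len by (auto simp: r_def strong_prod_def)
  qed
  moreover have "r \<noteq> []"
    using ne by (simp add: r_def)
  moreover have "set r \<subseteq> VG \<times> VH"
    using p'(1) q'(1) by (auto simp: r_def dest: set_zip_leftD set_zip_rightD)
  ultimately have "is_walk (VG \<times> VH) (strong_prod VG EG VH EH) (remdups_adj r)"
    by (intro is_walk_remdups_adj)
  moreover have "length (remdups_adj r) \<le> max (length p) (length q)"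
    using remdups_adj_length[of r] p'(3) q'(3) by (simp add: r_def n_def)
  ultimately show thesis
    using ne p'(3-5) q'(3-5) by (intro that) (simp_all add: r_def hd_zip last_zip)
qed

lemma connected_graph_strong_prod:
  assumes "connected_graph VG EG" "connected_graph VH EH"
  shows "connected_graph (VG \<times> VH) (strong_prod VG EG VH EH)"
  unfolding connected_graph_def
proof (intro ballI)
  fix x y assume "x \<in> VG \<times> VH" "y \<in> VG \<times> VH"
  then obtain p q where "is_walk VG EG p" "hd p = fst x" "last p = fst y"
    "is_walk VH EH q" "hd q = snd x" "last q = snd y"
    using assms unfolding connected_graph_def by (metis mem_Times_iff)
  then show "\<exists>r. is_walk (VG \<times> VH) (strong_prod VG EG VH EH) r \<and> hd r = x \<and> last r = y"
    by (metis prod.collapse strong_prod_walk)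
qed

lemma gdist_strong_prod:
  assumes "connected_graph VG EG" "connected_graph VH EH"
    and "g \<in> VG" "g' \<in> VG" "h \<in> VH" "h' \<in> VH"
  shows "gdist (VG \<times> VH) (strong_prod VG EG VH EH) (g, h) (g', h')
           = max (gdist VG EG g g') (gdist VH EH h h')"
proof (rule antisym)
  obtain p where p: "is_walk VG EG p" "hd p = g" "last p = g'" "length p = Suc (gdist VG EG g g')"
    using obtain_shortest_walk[OF assms(1,3,4)] .
  obtain q where q: "is_walk VH EH q" "hd q = h" "last q = h'" "length q = Suc (gdist VH EH h h')"
    using obtain_shortest_walk[OF assms(2,5,6)] .
  obtain r where "is_walk (VG \<times> VH) (strong_prod VG EG VH EH) r"
    "hd r = (g, h)" "last r = (g', h')" "length r \<le> max (length p) (length q)"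
    using strong_prod_walk[OF p(1) q(1)] p(2,3) q(2,3) by metis
  then show "gdist (VG \<times> VH) (strong_prod VG EG VH EH) (g, h) (g', h')
               \<le> max (gdist VG EG g g') (gdist VH EH h h')"
    using gdist_le_walk[of "VG \<times> VH" "strong_prod VG EG VH EH" r] p(4) q(4) by simp
next
  have conn: "connected_graph (VG \<times> VH) (strong_prod VG EG VH EH)"
    using assms(1,2) by (rule connected_graph_strong_prod)
  have "gdist VG EG (fst (g, h)) (fst (g', h'))
          \<le> gdist (VG \<times> VH) (strong_prod VG EG VH EH) (g, h) (g', h')"
    by (rule gdist_map_le[OF conn]) (use assms in \<open>auto simp: strong_prod_def\<close>)
  moreover have "gdist VH EH (snd (g, h)) (snd (g', h'))
          \<le> gdist (VG \<times> VH) (strong_prod VG EG VH EH) (g, h) (g', h')"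
    by (rule gdist_map_le[OF conn]) (use assms in \<open>auto simp: strong_prod_def\<close>)
  ultimately show "max (gdist VG EG g g') (gdist VH EH h h')
                     \<le> gdist (VG \<times> VH) (strong_prod VG EG VH EH) (g, h) (g', h')"
    by simp
qed

lemma gdist_step_le:
  assumes "graph V E" "connected_graph V E" "x \<in> V" "x' \<in> V" "E\<^sup>=\<^sup>= x y"
    and "x = x' \<or> max_distant V E x x'" "gdist V E x x' \<le> m" "1 \<le> m"
  shows "gdist V E x' y \<le> m"
proof (cases "y = x")
  case True
  then show ?thesis
    using gdist_commute[OF assms(1-4)] assms(7) by simp
next
  case False
  then have "E x y"
    using assms(5) by simp
  then show ?thesis
    using assms(6-8) gdist_adjacent_le_1[OF assms(1)] graph_edgeD(2)[OF assms(1)]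
    unfolding max_distant_def by fastforce
qed

lemma max_distant_strong_prod_iff:
  assumes "connected_graph VG EG" "connected_graph VH EH"
    and "g \<in> VG" "g' \<in> VG" "h \<in> VH" "h' \<in> VH"
  shows "max_distant (VG \<times> VH) (strong_prod VG EG VH EH) (g, h) (g', h') \<longleftrightarrow>
    (\<forall>a\<in>VG. \<forall>b\<in>VH. strong_prod VG EG VH EH (g, h) (a, b) \<longrightarrow>
       max (gdist VG EG g' a) (gdist VH EH h' b) \<le> max (gdist VG EG g g') (gdist VH EH h h'))"
  using assms by (simp add: max_distant_def gdist_strong_prod)

lemma max_distant_strong_prodI:
  assumes G: "graph VG EG" "connected_graph VG EG" and H: "graph VH EH" "connected_graph VH EH"
    and V: "g \<in> VG" "g' \<in> VG" "h \<in> VH" "h' \<in> VH" and "(g, h) \<noteq> (g', h')"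
    and "g = g' \<or> max_distant VG EG g g'" "h = h' \<or> max_distant VH EH h h'"
  shows "max_distant (VG \<times> VH) (strong_prod VG EG VH EH) (g, h) (g', h')"
  unfolding max_distant_strong_prod_iff[OF G(2) H(2) V]
proof (intro ballI impI)
  fix a b assume "a \<in> VG" "b \<in> VH" "strong_prod VG EG VH EH (g, h) (a, b)"
  then have "EG\<^sup>=\<^sup>= g a" "EH\<^sup>=\<^sup>= h b"
    by (auto simp: strong_prod_def)
  define m where "m = max (gdist VG EG g g') (gdist VH EH h h')"
  have "1 \<le> m"
    using assms(9) gdist_eq_0_iff[OF G(2) V(1,2)] gdist_eq_0_iff[OF H(2) V(3,4)] by (auto simp: m_def)
  then have "gdist VG EG g' a \<le> m" "gdist VH EH h' b \<le> m"
    using gdist_step_le[OF G V(1,2) \<open>EG\<^sup>=\<^sup>= g a\<close>] gdist_step_le[OF H V(3,4) \<open>EH\<^sup>=\<^sup>= h b\<close>] assms(10,11)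
    by (auto simp: m_def)
  then show "max (gdist VG EG g' a) (gdist VH EH h' b) \<le> m"
    by simp
qed

lemma strong_prod_SR_imp_SR_strong_prod:
  assumes G: "graph VG EG" "connected_graph VG EG" and H: "graph VH EH" "connected_graph VH EH"
    and "strong_prod VG (SR VG EG) VH (SR VH EH) x y"
  shows "SR (VG \<times> VH) (strong_prod VG EG VH EH) x y"
proof -
  obtain g h g' h' where xy: "x = (g, h)" "y = (g', h')"
    by (cases x, cases y) auto
  have V: "g \<in> VG" "g' \<in> VG" "h \<in> VH" "h' \<in> VH"
    using assms(5) xy by (auto simp: strong_prod_def)
  have "(g, h) \<noteq> (g', h')"
    and "g = g' \<or> mutually_max_distant VG EG g g'" "h = h' \<or> mutually_max_distant VH EH h h'"
    using assms(5) xy by (auto simp: strong_prod_def SR_def)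
  then show ?thesis
    using max_distant_strong_prodI[OF G H V] max_distant_strong_prodI[OF G H V(2,1,4,3)] xy V
    by (auto simp: SR_def mutually_max_distant_def)
qed

lemma max_distant_strong_prodD:
  assumes "connected_graph VG EG" "connected_graph VH EH"
    and V: "g \<in> VG" "g' \<in> VG" "h \<in> VH" "h' \<in> VH"
    and md: "max_distant (VG \<times> VH) (strong_prod VG EG VH EH) (g, h) (g', h')"
  shows "gdist VH EH h h' \<le> gdist VG EG g g' \<Longrightarrow> max_distant VG EG g g'"
    and "gdist VG EG g g' \<le> gdist VH EH h h' \<Longrightarrow> max_distant VH EH h h'"
proof -
  have step: "max (gdist VG EG g' a) (gdist VH EH h' b) \<le> max (gdist VG EG g g') (gdist VH EH h h')"
    if "a \<in> VG" "b \<in> VH" "strong_prod VG EG VH EH (g, h) (a, b)" for a b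
    using md that unfolding max_distant_strong_prod_iff[OF assms(1-6)] by blast
  show "max_distant VG EG g g'" if le: "gdist VH EH h h' \<le> gdist VG EG g g'"
    unfolding max_distant_def
  proof (intro ballI impI)
    fix a assume a: "a \<in> VG" "EG g a"
    then have "strong_prod VG EG VH EH (g, h) (a, h)"
      using V by (simp add: strong_prod_def)
    then show "gdist VG EG g' a \<le> gdist VG EG g g'"
      using step[OF a(1) V(3)] le by simp
  qed
  show "max_distant VH EH h h'" if le: "gdist VG EG g g' \<le> gdist VH EH h h'"
    unfolding max_distant_def
  proof (intro ballI impI)
    fix b assume b: "b \<in> VH" "EH h b"
    then have "strong_prod VG EG VH EH (g, h) (g, b)"
      using V by (simp add: strong_prod_def)
    then show "gdist VH EH h' b \<le> gdist VH EH h h'"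
      using step[OF V(1) b(1)] le by simp
  qed
qed

lemma SR_strong_prod_imp_cart_sum:
  assumes G: "graph VG EG" "connected_graph VG EG" and H: "graph VH EH" "connected_graph VH EH"
    and "SR (VG \<times> VH) (strong_prod VG EG VH EH) x y"
  shows "cart_sum VG (SR VG EG) VH (SR VH EH) x y"
proof -
  obtain g h g' h' where xy: "x = (g, h)" "y = (g', h')"
    by (cases x, cases y) auto
  have V: "g \<in> VG" "g' \<in> VG" "h \<in> VH" "h' \<in> VH"
    using assms(5) xy by (auto simp: SR_def)
  have ne: "(g, h) \<noteq> (g', h')"
    and md: "max_distant (VG \<times> VH) (strong_prod VG EG VH EH) (g, h) (g', h')"
      "max_distant (VG \<times> VH) (strong_prod VG EG VH EH) (g', h') (g, h)"
    using assms(5) xy by (auto simp: SR_def mutually_max_distant_def)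
  note D = max_distant_strong_prodD[OF G(2) H(2) V md(1)]
    and D' = max_distant_strong_prodD[OF G(2) H(2) V(2,1,4,3) md(2)]
  have commute: "gdist VG EG g' g = gdist VG EG g g'" "gdist VH EH h' h = gdist VH EH h h'"
    using gdist_commute[OF G V(2,1)] gdist_commute[OF H V(4,3)] by simp_all
  consider "gdist VH EH h h' \<le> gdist VG EG g g'" | "gdist VG EG g g' \<le> gdist VH EH h h'"
    by linarith
  then have "SR VG EG g g' \<or> SR VH EH h h'"
  proof cases
    case 1
    then have "g \<noteq> g'"
      using ne gdist_eq_0_iff[OF H(2) V(3,4)] V(1) by auto
    then show ?thesis
      using D(1) D'(1) 1 commute V by (simp add: SR_def mutually_max_distant_def)
  next
    case 2
    then have "h \<noteq> h'"
      using ne gdist_eq_0_iff[OF G(2) V(1,2)] V(3) by auto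
    then show ?thesis
      using D(2) D'(2) 2 commute V by (simp add: SR_def mutually_max_distant_def)
  qed
  then show ?thesis
    using xy V by (simp add: cart_sum_def)
qed

lemma indep_num_antimono:
  assumes "finite V" "\<And>x y. E x y \<Longrightarrow> E' x y"
  shows "indep_num V E' \<le> indep_num V E"
proof -
  have sub: "{S. independent_set V E' S} \<subseteq> {S. independent_set V E S}"
    using assms(2) unfolding independent_set_def by blast
  have fin: "finite {S. independent_set V E S}"
    by (rule finite_subset[of _ "Pow V"]) (use assms(1) in \<open>auto simp: independent_set_def\<close>)
  have "{} \<in> {S. independent_set V E' S}"
    by (simp add: independent_set_def)
  then show ?thesis
    unfolding indep_num_def using sub fin by (intro Max_mono) auto
qed

theorem corollary8:
  fixes VG :: "'a set" and EG :: "'a \<Rightarrow> 'a \<Rightarrow> bool"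
    and VH :: "'b set" and EH :: "'b \<Rightarrow> 'b \<Rightarrow> bool"
  assumes "graph VG EG" and "connected_graph VG EG"
      and "graph VH EH" and "connected_graph VH EH"
  shows "indep_num (VG \<times> VH) (strong_prod VG (SR VG EG) VH (SR VH EH))
           \<ge> indep_num (VG \<times> VH) (SR (VG \<times> VH) (strong_prod VG EG VH EH))
       \<and> indep_num (VG \<times> VH) (SR (VG \<times> VH) (strong_prod VG EG VH EH))
           \<ge> indep_num (VG \<times> VH) (cart_sum VG (SR VG EG) VH (SR VH EH))"
proof -
  have "finite (VG \<times> VH)"
    using assms(1,3) unfolding graph_def by blast
  then show ?thesis
    using indep_num_antimono strong_prod_SR_imp_SR_strong_prod[OF assms] SR_strong_prod_imp_cart_sum[OF assms]
    by blast
qed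

end
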